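(* Let $C=\ln 4/(\ln 4-1)\approx 3.588$. Let $\delta$ be a positive integer and let $G$ be a graph on $n$ vertices with minimum degree at least $\delta$, where $n\ge (C-1)\delta^2+(3C-1)\delta+2$. Then either $G=K_{\delta,n-\delta}$ or $i(G)<i(K_{\delta,n-\delta})$.
   Context: Graphs are simple, loopless and finite. $i(G)$ denotes the total number of independent sets in $G$ (including the empty set). $K_{a,b}$ is the complete bipartite graph with $a$ vertices in one part and $b$ in the other. *)

theory Defs
  imports "HOL-Analysis.Analysis"
begin

definition simple_graph :: "'a set \<Rightarrow> ('a \<Rightarrow> 'a \<Rightarrow> bool) \<Rightarrow> bool" where
  "simple_graph V E \<longleftrightarrow> finite V \<and> (\<forall>x y. E x y \<longrightarrow> x \<in> V \<and> y \<in> V)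
     \<and> (\<forall>x y. E x y \<longrightarrow> E y x) \<and> (\<forall>x. \<not> E x x)"

definition degree :: "'a set \<Rightarrow> ('a \<Rightarrow> 'a \<Rightarrow> bool) \<Rightarrow> 'a \<Rightarrow> nat" where
  "degree V E v = card {u \<in> V. E v u}"

definition independent_set :: "'a set \<Rightarrow> ('a \<Rightarrow> 'a \<Rightarrow> bool) \<Rightarrow> 'a set \<Rightarrow> bool" where
  "independent_set V E S \<longleftrightarrow> S \<subseteq> V \<and> (\<forall>x\<in>S. \<forall>y\<in>S. \<not> E x y)"

definition num_indep :: "'a set \<Rightarrow> ('a \<Rightarrow> 'a \<Rightarrow> bool) \<Rightarrow> nat" where
  "num_indep V E = card {S. independent_set V E S}"

definition Kbip_V :: "nat \<Rightarrow> nat \<Rightarrow> nat set" where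
  "Kbip_V a b = {0..<a+b}"

definition Kbip_E :: "nat \<Rightarrow> nat \<Rightarrow> nat \<Rightarrow> nat \<Rightarrow> bool" where
  "Kbip_E a b x y \<longleftrightarrow> x < a+b \<and> y < a+b \<and> ((x < a) \<noteq> (y < a))"

definition graph_iso :: "'a set \<Rightarrow> ('a \<Rightarrow> 'a \<Rightarrow> bool) \<Rightarrow> 'b set \<Rightarrow> ('b \<Rightarrow> 'b \<Rightarrow> bool) \<Rightarrow> bool" where
  "graph_iso V E V' E' \<longleftrightarrow> (\<exists>f. bij_betw f V V' \<and> (\<forall>x\<in>V. \<forall>y\<in>V. E x y \<longleftrightarrow> E' (f x) (f y)))"

end

theory Submission
  imports Defs
begin

text \<open>
  Fix a maximum independent set \<open>A\<close> and let \<open>B = V - A\<close>. An independent set splits into an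
  independent \<open>J \<subseteq> B\<close> and a set of common non-neighbours of \<open>J\<close> in \<open>A\<close>, so
  \<open>i(G) \<le> \<Sum>\<^sub>J 2^|N(J)|\<close>, where maximality of \<open>A\<close> gives \<open>|N(J)| + |J| \<le> |A|\<close>, and also
  \<open>|N(J)| + deg\<^sub>A(b) \<le> |A|\<close> for every \<open>b \<in> J\<close>. All \<open>\<ge> \<delta>\<close> neighbours of a vertex of \<open>A\<close> lie in
  \<open>B\<close>, so \<open>|B| \<ge> \<delta>\<close>.

  If \<open>|B| = \<delta>\<close>, then \<open>A\<close> is completely joined to \<open>B\<close>: either \<open>B\<close> is independent and
  \<open>G \<cong> K\<^sub>\<delta>\<^sub>,\<^sub>n\<^sub>-\<^sub>\<delta>\<close>, or every nonempty \<open>J\<close> has weight 1 and an edge \<open>xy\<close> inside \<open>B\<close>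
  removes the term \<open>J = {x, y}\<close>, so \<open>i(G) \<le> 2^(n-\<delta>) + 2^\<delta> - 2\<close>. If \<open>2|B| \<ge> 5\<delta>\<close>, the sum
  is at most \<open>2^|A| (3/2)^|B| \<le> 2^(n-\<delta>)\<close>. Otherwise \<open>n \<ge> 5\<delta>\<^sup>2/2 + 5\<delta> + 2\<close> forces
  \<open>(\<delta>+1)|B| < |A|\<close>, and double counting the edges between \<open>A\<close> and \<open>B\<close> shows that at most
  \<open>|B| - \<delta>\<close> vertices of \<open>B\<close> have fewer than \<open>\<delta> + 2\<close> neighbours in \<open>A\<close>; the sets \<open>J\<close>
  meeting the other vertices contribute at most \<open>2^n / 2^(\<delta>+2)\<close> in total, the remaining ones
  at most \<open>2^|A| (3/2)^(|B|-\<delta>)\<close>, together again at most \<open>2^(n-\<delta>)\<close>.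
  In all cases \<open>i(G) < 2^(n-\<delta>) + 2^\<delta> - 1 \<le> i(K\<^sub>\<delta>\<^sub>,\<^sub>n\<^sub>-\<^sub>\<delta>)\<close>.
\<close>

lemma threshold_ge:
  "5/2 * real d ^ 2 + 5 * real d + 2
     \<le> (ln 4 / (ln 4 - 1) - 1) * real d ^ 2 + (3 * (ln 4 / (ln 4 - 1)) - 1) * real d + 2"
proof -
  have ln4: "ln (4::real) = 2 * ln 2"
    using ln_realpow[of 2 2] by simp
  have "1 < ln (4::real)" "ln (4::real) \<le> 7/5"
    using ln4 ln2_ge_two_thirds ln2_le_25_over_36 by linarith+
  then have C: "7/2 \<le> ln (4::real) / (ln 4 - 1)"
    by (simp add: field_simps)
  have "5/2 * real d ^ 2 \<le> (ln 4 / (ln 4 - 1) - 1) * real d ^ 2"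
    using C by (intro mult_right_mono) auto
  moreover have "5 * real d \<le> (3 * (ln 4 / (ln 4 - 1)) - 1) * real d"
    using C by (intro mult_right_mono) auto
  ultimately show ?thesis by linarith
qed

lemma sum_power_card_Pow:
  fixes x :: "'a :: comm_semiring_1"
  assumes "finite A"
  shows "(\<Sum>X\<in>Pow A. x ^ card X) = (x + 1) ^ card A"
  using prod_add[OF assms, of "\<lambda>_. x" "\<lambda>_. 1"] by simp

lemma sum_card_filter_swap:
  assumes "finite A" "finite B"
  shows "(\<Sum>a\<in>A. card {b\<in>B. R a b}) = (\<Sum>b\<in>B. card {a\<in>A. R a b})"
proof -
  have card_eq: "\<And>X P. finite X \<Longrightarrow> card {x\<in>X. P x} = (\<Sum>x\<in>X. if P x then 1 else 0)"
    by (simp add: sum.inter_filter[symmetric])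
  show ?thesis
    using assms by (simp add: card_eq sum.swap[of "\<lambda>a b. if R a b then 1 else 0"])
qed

lemma num_indep_Kbip_ge:
  "2 ^ b + 2 ^ a \<le> num_indep (Kbip_V a b) (Kbip_E a b) + 1"
proof -
  let ?P = "Pow {a..<a+b}" and ?Q = "Pow {0..<a} - {{}}"
  have "?P \<union> ?Q \<subseteq> {S. independent_set (Kbip_V a b) (Kbip_E a b) S}"
    by (auto simp: independent_set_def Kbip_V_def Kbip_E_def)
  moreover have "finite {S. independent_set (Kbip_V a b) (Kbip_E a b) S}"
    by (rule finite_subset[of _ "Pow (Kbip_V a b)"]) (auto simp: independent_set_def Kbip_V_def)
  ultimately have "card (?P \<union> ?Q) \<le> num_indep (Kbip_V a b) (Kbip_E a b)"
    unfolding num_indep_def by (rule card_mono[rotated])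
  moreover have "card (?P \<union> ?Q) = 2 ^ b + (2 ^ a - 1)"
    by (subst card_Un_disjoint) (fastforce simp: card_Pow)+
  moreover have "(1::nat) \<le> 2 ^ a" by simp
  ultimately show ?thesis by linarith
qed

lemma graph_iso_Kbip:
  assumes G: "simple_graph V E" and "A \<subseteq> V" "card (V - A) = d"
    and indep_A: "\<forall>x\<in>A. \<forall>y\<in>A. \<not> E x y" and indep_B: "\<forall>x\<in>V-A. \<forall>y\<in>V-A. \<not> E x y"
    and complete: "\<forall>a\<in>A. \<forall>b\<in>V-A. E a b"
  shows "graph_iso V E (Kbip_V d (card V - d)) (Kbip_E d (card V - d))"
proof -
  have fin: "finite V" and sym: "\<And>x y. E x y \<Longrightarrow> E y x" using G by (auto simp: simple_graph_def)
  have finA: "finite A" using fin \<open>A \<subseteq> V\<close> finite_subset by auto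
  have cV: "card V = card A + d"
    using \<open>A \<subseteq> V\<close> \<open>card (V - A) = d\<close> card_Diff_subset[OF finA] card_mono[OF fin] by fastforce
  obtain g where g: "bij_betw g (V - A) {0..<d}"
    using ex_bij_betw_finite_nat[of "V - A"] fin \<open>card (V - A) = d\<close> by auto
  obtain h where h: "bij_betw h A {0..<card A}"
    using ex_bij_betw_finite_nat[of A] finA by auto
  define f where "f x = (if x \<in> V - A then g x else d + h x)" for x
  have "bij_betw f (V - A) {0..<d}"
    using g by (subst bij_betw_cong[where g = g]) (auto simp: f_def)
  moreover have "bij_betw f A {d..<card A + d}"
  proof -
    have "bij_betw (plus d) {0..<card A} {d..<card A + d}"
      unfolding bij_betw_def by (auto simp: inj_on_def)
    then have "bij_betw (plus d \<circ> h) A {d..<card A + d}" by (rule bij_betw_trans[OF h])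
    then show ?thesis by (subst bij_betw_cong[where g = "plus d \<circ> h"]) (auto simp: f_def)
  qed
  ultimately have "bij_betw f ((V - A) \<union> A) ({0..<d} \<union> {d..<card A + d})"
    by (rule bij_betw_combine) auto
  moreover have "(V - A) \<union> A = V" "{0..<d} \<union> {d..<card A + d} = Kbip_V d (card V - d)"
    using \<open>A \<subseteq> V\<close> by (auto simp: Kbip_V_def cV)
  ultimately have bij: "bij_betw f V (Kbip_V d (card V - d))" by simp
  have part: "f x < d + (card V - d) \<and> (f x < d \<longleftrightarrow> x \<in> V - A)" if "x \<in> V" for x
  proof
    show "f x < d + (card V - d)" using that bij unfolding Kbip_V_def bij_betw_def by auto
    show "f x < d \<longleftrightarrow> x \<in> V - A" using that g unfolding bij_betw_def f_def by auto
  qed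
  have "E x y \<longleftrightarrow> Kbip_E d (card V - d) (f x) (f y)" if "x \<in> V" "y \<in> V" for x y
    using that part[OF \<open>x \<in> V\<close>] part[OF \<open>y \<in> V\<close>] indep_A indep_B complete sym
    unfolding Kbip_E_def by blast
  then show ?thesis unfolding graph_iso_def using bij by blast
qed

definition nonneighbours :: "('a \<Rightarrow> 'a \<Rightarrow> bool) \<Rightarrow> 'a set \<Rightarrow> 'a set \<Rightarrow> 'a set" where
  "nonneighbours E A J = {a \<in> A. \<forall>b\<in>J. \<not> E a b}"

lemma num_indep_le_sum_nonneighbours:
  assumes "finite V" "A \<subseteq> V"
  shows "num_indep V E
    \<le> (\<Sum>J | J \<subseteq> V - A \<and> independent_set V E J. 2 ^ card (nonneighbours E A J))"
proof -
  let ?I = "{J. J \<subseteq> V - A \<and> independent_set V E J}"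
  let ?split = "\<lambda>S. (S - A, S \<inter> A)"
  have finI: "finite ?I"
    by (rule finite_subset[of _ "Pow V"]) (use assms(1) in auto)
  have finN: "finite (nonneighbours E A J)" for J
    by (rule finite_subset[of _ V]) (use assms in \<open>auto simp: nonneighbours_def\<close>)
  have "inj_on ?split {S. independent_set V E S}"
    by (rule inj_onI) (metis Un_Diff_Int prod.inject)
  moreover have "?split ` {S. independent_set V E S} \<subseteq> (SIGMA J:?I. Pow (nonneighbours E A J))"
    by (auto simp: independent_set_def nonneighbours_def)
  moreover have "finite (SIGMA J:?I. Pow (nonneighbours E A J))"
    using finI finN by (intro finite_SigmaI) auto
  ultimately have "num_indep V E \<le> card (SIGMA J:?I. Pow (nonneighbours E A J))"
    unfolding num_indep_def by (rule card_inj_on_le)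
  also have "\<dots> = (\<Sum>J\<in>?I. 2 ^ card (nonneighbours E A J))"
    using finI finN by (simp add: card_Pow)
  finally show ?thesis .
qed

lemma card_nonneighbours_add_card_adjacent_le:
  assumes "finite A" "b \<in> J"
  shows "card (nonneighbours E A J) + card {a\<in>A. E a b} \<le> card A"
proof -
  have "card (nonneighbours E A J) + card {a\<in>A. E a b}
      = card (nonneighbours E A J \<union> {a\<in>A. E a b})"
    using assms by (intro card_Un_disjoint[symmetric]) (auto simp: nonneighbours_def)
  also have "\<dots> \<le> card A" using assms by (intro card_mono) (auto simp: nonneighbours_def)
  finally show ?thesis .
qed

lemma power_le_divide_power:
  fixes x :: real
  assumes "1 \<le> x" "t + k \<le> m"
  shows "x ^ t \<le> x ^ m / x ^ k"
proof -
  have "x ^ t * x ^ k \<le> x ^ m"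
    using assms by (simp add: power_add[symmetric] power_increasing)
  then show ?thesis using assms(1) by (simp add: field_simps)
qed

lemma card_low_degree_add_le:
  assumes "finite A" "finite B"
    and deg: "\<And>a. a \<in> A \<Longrightarrow> d \<le> card {b\<in>B. R a b}"
    and sparse: "card B * (d + 1) < card A"
  shows "card {b\<in>B. card {a\<in>A. R a b} \<le> d + 1} + d \<le> card B"
proof (rule ccontr)
  define L where "L = {b\<in>B. card {a\<in>A. R a b} \<le> d + 1}"
  have LB: "L \<subseteq> B" by (auto simp: L_def)
  assume "\<not> card {b\<in>B. card {a\<in>A. R a b} \<le> d + 1} + d \<le> card B"
  moreover have "card L \<le> card B" using LB \<open>finite B\<close> by (rule card_mono[rotated])
  ultimately have few_high: "card (B - L) + 1 \<le> d"
    using card_Diff_subset[OF finite_subset[OF LB \<open>finite B\<close>] LB] by (simp add: L_def)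
  have "card A * d \<le> (\<Sum>a\<in>A. card {b\<in>B. R a b})"
    using sum_bounded_below[of A d] deg by (simp add: mult.commute)
  also have "\<dots> = (\<Sum>b\<in>B - L. card {a\<in>A. R a b}) + (\<Sum>b\<in>L. card {a\<in>A. R a b})"
    unfolding sum_card_filter_swap[OF assms(1,2)]
    using assms(2) LB by (rule sum.subset_diff[rotated])
  also have "\<dots> \<le> card (B - L) * card A + card L * (d + 1)"
  proof (intro add_mono)
    show "(\<Sum>b\<in>B - L. card {a\<in>A. R a b}) \<le> card (B - L) * card A"
      using sum_bounded_above[of "B - L" "\<lambda>b. card {a\<in>A. R a b}" "card A"] \<open>finite A\<close>
      by (simp add: card_mono)
    show "(\<Sum>b\<in>L. card {a\<in>A. R a b}) \<le> card L * (d + 1)"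
      using sum_bounded_above[of L "\<lambda>b. card {a\<in>A. R a b}" "d + 1"] by (simp add: L_def)
  qed
  also have "\<dots> \<le> (d - 1) * card A + card B * (d + 1)"
    using few_high \<open>card L \<le> card B\<close> by (intro add_mono mult_le_mono1) auto
  also have "\<dots> < (d - 1) * card A + card A"
    using sparse by simp
  also have "\<dots> = card A * d"
    using few_high by (cases d) simp_all
  finally show False by simp
qed

lemma two_power_le_four_thirds_power:
  assumes "5 * d \<le> 2 * m"
  shows "(2::real) ^ d \<le> (4/3) ^ m"
proof -
  have "((2::real) ^ d)\<^sup>2 = 4 ^ d"
    by (simp add: power2_eq_square power_mult_distrib[symmetric])
  also have "\<dots> \<le> ((4/3) ^ 5) ^ d"
    by (rule power_mono) (simp_all add: power_divide)
  also have "\<dots> \<le> (4/3) ^ (2 * m)"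
    unfolding power_mult[symmetric] using assms by (intro power_increasing) auto
  also have "\<dots> = ((4/3) ^ m)\<^sup>2"
    by (simp add: power_mult mult.commute)
  finally show ?thesis by (rule power2_le_imp_le) simp
qed

lemma two_power_three_halves_power_add_le:
  assumes "s + d \<le> b" "d < b"
  shows "2 ^ a * (3/2) ^ s + 2 ^ b * (2 ^ a / 2 ^ (d + 2)) \<le> (2::real) ^ (a + b - d)"
proof -
  define t where "t = b - d"
  have "t \<ge> 1" "s \<le> t" "a + b - d = a + t" using assms by (auto simp: t_def)
  have "(2::real) ^ a * (3/2) ^ s \<le> 2 ^ a * (3/2) ^ t"
    using \<open>s \<le> t\<close> by (intro mult_left_mono power_increasing) auto
  also have "\<dots> = 2 ^ (a + t) * (3/4) ^ t"
    by (simp add: power_add power_mult_distrib[symmetric])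
  also have "\<dots> \<le> 2 ^ (a + t) * (3/4)"
    using power_decreasing[of 1 t "3/4::real"] \<open>t \<ge> 1\<close> by (intro mult_left_mono) auto
  finally have "(2::real) ^ a * (3/2) ^ s \<le> 2 ^ (a + t) * (3/4)" .
  moreover have "2 ^ b * (2 ^ a / 2 ^ (d + 2)) = (2::real) ^ (a + t) / 4"
    using assms by (simp add: t_def power_add[symmetric] power_diff mult.commute add.commute)
  ultimately show ?thesis
    using \<open>a + b - d = a + t\<close> by simp
qed

lemma num_indep_add_two_le:
  assumes G: "simple_graph V E" and "A \<subseteq> V"
    and complete: "\<forall>a\<in>A. \<forall>b\<in>V-A. E a b"
    and edge: "x \<in> V - A" "y \<in> V - A" "E x y"
  shows "num_indep V E + 2 \<le> 2 ^ card A + 2 ^ card (V - A)"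
proof -
  have fin: "finite V" and "x \<noteq> y" using G edge by (auto simp: simple_graph_def)
  let ?I = "{J. J \<subseteq> V - A \<and> independent_set V E J}"
  have finI: "finite ?I" by (rule finite_subset[of _ "Pow V"]) (use fin in auto)
  have empty: "{} \<in> ?I" by (simp add: independent_set_def)
  have dominated: "nonneighbours E A J = {}" if "J \<in> ?I - {{}}" for J
    using that complete by (auto simp: nonneighbours_def)
  have "?I \<subseteq> Pow (V - A) - {{x, y}}"
    using edge by (auto simp: independent_set_def)
  then have "card ?I \<le> 2 ^ card (V - A) - 1"
    using card_mono[of "Pow (V - A) - {{x, y}}" ?I] fin edge by (simp add: card_Pow)
  moreover have "card (?I - {{}}) + 1 = card ?I"
    using card.remove[OF finI empty] by simp
  moreover have "2 \<le> (2::nat) ^ card (V - A)"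
    using edge fin by (cases "card (V - A)") auto
  moreover have "(\<Sum>J\<in>?I. 2 ^ card (nonneighbours E A J))
      = 2 ^ card (nonneighbours E A {}) + (\<Sum>J\<in>?I - {{}}. (2::nat) ^ card (nonneighbours E A J))"
    using finI empty by (rule sum.remove)
  moreover have "\<dots> = 2 ^ card A + card (?I - {{}})"
    using dominated by (simp add: nonneighbours_def[of E A "{}"])
  ultimately show ?thesis
    using num_indep_le_sum_nonneighbours[OF fin \<open>A \<subseteq> V\<close>, of E] by linarith
qed

locale maximum_independent_set =
  fixes V :: "'a set" and E :: "'a \<Rightarrow> 'a \<Rightarrow> bool" and A :: "'a set"
  assumes graph: "simple_graph V E"
    and independent: "independent_set V E A"
    and maximum: "\<And>S. independent_set V E S \<Longrightarrow> card S \<le> card A"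
begin

lemma finite_V: "finite V"
  using graph by (simp add: simple_graph_def)

lemma A_subset: "A \<subseteq> V"
  using independent by (simp add: independent_set_def)

lemma finite_A: "finite A"
  using finite_V A_subset by (rule finite_subset[rotated])

lemma card_V: "card V = card A + card (V - A)"
  using finite_V A_subset by (metis card_Diff_subset card_mono finite_subset le_add_diff_inverse)

lemma A_nonempty: "V \<noteq> {} \<Longrightarrow> A \<noteq> {}"
proof -
  assume "V \<noteq> {}"
  then obtain v where "v \<in> V" by blast
  then have "independent_set V E {v}"
    using graph by (simp add: independent_set_def simple_graph_def)
  then show "A \<noteq> {}" using maximum[of "{v}"] by auto
qed

lemma degree_eq_card_adjacent_outside: "a \<in> A \<Longrightarrow> degree V E a = card {b \<in> V - A. E a b}"
  using independent unfolding degree_def independent_set_def by (metis Diff_iff)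

lemma card_nonneighbours_add_card_le:
  assumes "J \<subseteq> V - A" "independent_set V E J"
  shows "card (nonneighbours E A J) + card J \<le> card A"
proof -
  have sym: "E x y \<Longrightarrow> E y x" for x y using graph by (simp add: simple_graph_def)
  have "independent_set V E (nonneighbours E A J \<union> J)"
    using independent assms sym unfolding independent_set_def nonneighbours_def by blast
  then have "card (nonneighbours E A J \<union> J) \<le> card A" by (rule maximum)
  moreover have "finite J"
    using assms(1) finite_V by (rule finite_subset[OF subset_trans[OF _ Diff_subset]])
  moreover have "finite (nonneighbours E A J)"
    using finite_A by (simp add: nonneighbours_def)
  moreover have "nonneighbours E A J \<inter> J = {}"
    using assms(1) by (auto simp: nonneighbours_def)
  ultimately show ?thesis by (simp add: card_Un_disjoint)
qed

lemma real_num_indep_le_sum_nonneighbours: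
  "real (num_indep V E)
    \<le> (\<Sum>J | J \<subseteq> V - A \<and> independent_set V E J. 2 ^ card (nonneighbours E A J))"
proof -
  have "real (num_indep V E)
      \<le> real (\<Sum>J | J \<subseteq> V - A \<and> independent_set V E J. 2 ^ card (nonneighbours E A J))"
    using num_indep_le_sum_nonneighbours[OF finite_V A_subset] by (rule of_nat_mono)
  then show ?thesis by simp
qed

lemma sum_nonneighbours_subset_le:
  assumes "X \<subseteq> V - A"
  shows "(\<Sum>J | J \<subseteq> X \<and> independent_set V E J. (2::real) ^ card (nonneighbours E A J))
    \<le> 2 ^ card A * (3/2) ^ card X"
proof -
  have finX: "finite X" using assms finite_V finite_subset by blast
  have "(\<Sum>J | J \<subseteq> X \<and> independent_set V E J. (2::real) ^ card (nonneighbours E A J))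
      \<le> (\<Sum>J | J \<subseteq> X \<and> independent_set V E J. 2 ^ card A * (1/2) ^ card J)"
  proof (rule sum_mono)
    fix J assume "J \<in> {J. J \<subseteq> X \<and> independent_set V E J}"
    then have "card (nonneighbours E A J) + card J \<le> card A"
      using assms by (intro card_nonneighbours_add_card_le) auto
    then show "(2::real) ^ card (nonneighbours E A J) \<le> 2 ^ card A * (1/2) ^ card J"
      using power_le_divide_power[of 2] by (simp add: power_one_over)
  qed
  also have "\<dots> \<le> (\<Sum>J\<in>Pow X. 2 ^ card A * (1/2) ^ card J)"
    using finX by (intro sum_mono2) auto
  also have "\<dots> = 2 ^ card A * (3/2) ^ card X"
    using finX by (simp add: sum_distrib_left[symmetric] sum_power_card_Pow)
  finally show ?thesis .
qed

lemma sum_nonneighbours_not_subset_le: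
  assumes "S \<subseteq> V - A" and high: "\<And>b. b \<in> V - A - S \<Longrightarrow> k \<le> card {a\<in>A. E a b}"
  shows "(\<Sum>J | J \<subseteq> V - A \<and> independent_set V E J \<and> \<not> J \<subseteq> S. (2::real) ^ card (nonneighbours E A J))
    \<le> 2 ^ card (V - A) * (2 ^ card A / 2 ^ k)"
proof -
  let ?I = "{J. J \<subseteq> V - A \<and> independent_set V E J \<and> \<not> J \<subseteq> S}"
  have "(\<Sum>J\<in>?I. (2::real) ^ card (nonneighbours E A J)) \<le> card ?I * (2 ^ card A / 2 ^ k)"
  proof (rule sum_bounded_above)
    fix J assume "J \<in> ?I"
    then obtain b where "b \<in> J" "b \<in> V - A - S" by auto
    then have "card (nonneighbours E A J) + k \<le> card A"
      using card_nonneighbours_add_card_adjacent_le[OF finite_A] high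
      by (meson add_le_mono le_refl order_trans)
    then show "(2::real) ^ card (nonneighbours E A J) \<le> 2 ^ card A / 2 ^ k"
      by (rule power_le_divide_power[rotated]) simp
  qed
  also have "card ?I \<le> card (Pow (V - A))"
    using finite_V by (intro card_mono) auto
  then have "real (card ?I) * (2 ^ card A / 2 ^ k) \<le> 2 ^ card (V - A) * (2 ^ card A / 2 ^ k)"
    using finite_V by (intro mult_right_mono) (auto simp: card_Pow)
  finally show ?thesis .
qed


lemma num_indep_le_if_wide:
  assumes "5 * d \<le> 2 * card (V - A)"
  shows "real (num_indep V E) \<le> 2 ^ (card V - d)"
proof -
  have "real (num_indep V E) * 2 ^ d \<le> 2 ^ card A * (3/2) ^ card (V - A) * 2 ^ d"
    using real_num_indep_le_sum_nonneighbours sum_nonneighbours_subset_le[of "V - A"]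
    by (intro mult_right_mono) auto
  also have "\<dots> \<le> 2 ^ card A * (3/2) ^ card (V - A) * (4/3) ^ card (V - A)"
    using two_power_le_four_thirds_power[OF assms] by (intro mult_left_mono) auto
  also have "\<dots> = 2 ^ (card V - d) * 2 ^ d"
    using assms card_V by (simp add: power_add[symmetric] power_mult_distrib[symmetric] mult.assoc)
  finally show ?thesis by simp
qed

lemma num_indep_le_if_narrow:
  assumes deg: "\<And>a. a \<in> A \<Longrightarrow> d \<le> card {b\<in>V-A. E a b}"
    and "d < card (V - A)" "2 * card (V - A) < 5 * d"
    and large: "5 * d\<^sup>2 + 10 * d + 4 \<le> 2 * card V"
  shows "real (num_indep V E) \<le> 2 ^ (card V - d)"
proof -
  define L where "L = {b\<in>V-A. card {a\<in>A. E a b} \<le> d + 1}"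
  let ?w = "\<lambda>J. (2::real) ^ card (nonneighbours E A J)"
  have "L \<subseteq> V - A" by (auto simp: L_def)
  have high: "d + 2 \<le> card {a\<in>A. E a b}" if "b \<in> V - A - L" for b
    using that by (auto simp: L_def)
  have "(2 * card (V - A) + 1) * (d + 2) \<le> 5 * d * (d + 2)"
    using assms(3) by (intro mult_le_mono1) linarith
  then have "card (V - A) * (d + 1) < card A"
    using large card_V by (simp add: algebra_simps power2_eq_square)
  then have "card L + d \<le> card (V - A)"
    unfolding L_def using finite_A finite_V deg by (intro card_low_degree_add_le) auto
  have finL: "finite {J. J \<subseteq> L \<and> independent_set V E J}"
    by (rule finite_subset[of _ "Pow V"]) (use \<open>L \<subseteq> V - A\<close> finite_V in auto)
  have finH: "finite {J. J \<subseteq> V - A \<and> independent_set V E J \<and> \<not> J \<subseteq> L}"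
    by (rule finite_subset[of _ "Pow V"]) (use finite_V in auto)
  have part: "{J. J \<subseteq> V - A \<and> independent_set V E J}
      = {J. J \<subseteq> L \<and> independent_set V E J}
        \<union> {J. J \<subseteq> V - A \<and> independent_set V E J \<and> \<not> J \<subseteq> L}"
    using \<open>L \<subseteq> V - A\<close> by auto
  have "real (num_indep V E) \<le> (\<Sum>J | J \<subseteq> V - A \<and> independent_set V E J. ?w J)"
    by (rule real_num_indep_le_sum_nonneighbours)
  also have "\<dots> = (\<Sum>J | J \<subseteq> L \<and> independent_set V E J. ?w J)
        + (\<Sum>J | J \<subseteq> V - A \<and> independent_set V E J \<and> \<not> J \<subseteq> L. ?w J)"
    unfolding part by (rule sum.union_disjoint[OF finL finH]) auto
  also have "\<dots> \<le> 2 ^ card A * (3/2) ^ card L + 2 ^ card (V - A) * (2 ^ card A / 2 ^ (d + 2))"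
    using sum_nonneighbours_subset_le[OF \<open>L \<subseteq> V - A\<close>]
      sum_nonneighbours_not_subset_le[OF \<open>L \<subseteq> V - A\<close> high]
    by (rule add_mono)
  also have "\<dots> \<le> 2 ^ (card A + card (V - A) - d)"
    using \<open>card L + d \<le> card (V - A)\<close> assms(2) by (rule two_power_three_halves_power_add_le)
  finally show ?thesis
    unfolding card_V .
qed


lemma num_indep_le_if_unbalanced:
  assumes deg: "\<And>a. a \<in> A \<Longrightarrow> d \<le> card {b\<in>V-A. E a b}"
    and "d < card (V - A)" and large: "5 * d\<^sup>2 + 10 * d + 4 \<le> 2 * card V"
  shows "num_indep V E \<le> 2 ^ (card V - d)"
proof -
  have "real (num_indep V E) \<le> 2 ^ (card V - d)"
    using num_indep_le_if_wide num_indep_le_if_narrow[OF deg assms(2) _ large]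
    by (cases "5 * d \<le> 2 * card (V - A)") auto
  then show ?thesis
    by (metis of_nat_le_iff of_nat_numeral of_nat_power)
qed

lemma graph_iso_Kbip_or_num_indep_add_two_le:
  assumes deg: "\<And>a. a \<in> A \<Longrightarrow> d \<le> card {b\<in>V-A. E a b}" and "card (V - A) = d"
  shows "graph_iso V E (Kbip_V d (card V - d)) (Kbip_E d (card V - d))
    \<or> num_indep V E + 2 \<le> 2 ^ (card V - d) + 2 ^ d"
proof -
  have complete: "\<forall>a\<in>A. \<forall>b\<in>V-A. E a b"
  proof (intro ballI)
    fix a b assume "a \<in> A" "b \<in> V - A"
    have "card {b\<in>V-A. E a b} = card (V - A)"
      using deg[OF \<open>a \<in> A\<close>] assms(2) card_mono[of "V - A" "{b\<in>V-A. E a b}"] finite_V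
      by auto
    then have "{b\<in>V-A. E a b} = V - A"
      using finite_V by (intro card_subset_eq) auto
    then show "E a b" using \<open>b \<in> V - A\<close> by blast
  qed
  show ?thesis
  proof (cases "\<forall>x\<in>V-A. \<forall>y\<in>V-A. \<not> E x y")
    case True
    then show ?thesis
      using graph_iso_Kbip[OF graph A_subset assms(2) _ True complete] independent
      by (simp add: independent_set_def)
  next
    case False
    then obtain x y where "x \<in> V - A" "y \<in> V - A" "E x y" by blast
    then show ?thesis
      using num_indep_add_two_le[OF graph A_subset complete] card_V assms(2) by auto
  qed
qed

end

lemma ex_maximum_independent_set:
  assumes "simple_graph V E"
  obtains A where "maximum_independent_set V E A"
proof -
  have "finite V" using assms by (simp add: simple_graph_def)
  then have "\<exists>A. independent_set V E A \<and> (\<forall>S. independent_set V E S \<longrightarrow> card S \<le> card A)"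
    by (intro ex_has_greatest_nat[of _ "{}" card "Suc (card V)"])
      (auto simp: independent_set_def card_mono le_imp_less_Suc)
  then show ?thesis
    using that assms unfolding maximum_independent_set_def by blast
qed

theorem mainTheorem3:
  fixes V :: "'a set" and E :: "'a \<Rightarrow> 'a \<Rightarrow> bool" and \<delta> :: nat
  assumes "simple_graph V E"
    and "\<delta> > 0"
    and "\<forall>v\<in>V. degree V E v \<ge> \<delta>"
    and "real (card V) \<ge> (ln 4 / (ln 4 - 1) - 1) * real \<delta> ^ 2
                         + (3 * (ln 4 / (ln 4 - 1)) - 1) * real \<delta> + 2"
  shows "graph_iso V E (Kbip_V \<delta> (card V - \<delta>)) (Kbip_E \<delta> (card V - \<delta>))
         \<or> num_indep V E < num_indep (Kbip_V \<delta> (card V - \<delta>)) (Kbip_E \<delta> (card V - \<delta>))"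
proof -
  obtain A where "maximum_independent_set V E A"
    using ex_maximum_independent_set[OF assms(1)] .
  then interpret maximum_independent_set V E A .
  have "real (5 * \<delta>\<^sup>2 + 10 * \<delta> + 4) \<le> real (2 * card V)"
    using assms(4) threshold_ge[of \<delta>] by simp
  then have large: "5 * \<delta>\<^sup>2 + 10 * \<delta> + 4 \<le> 2 * card V"
    by (rule of_nat_le_iff[THEN iffD1])
  have deg: "\<delta> \<le> card {b\<in>V-A. E a b}" if "a \<in> A" for a
    using assms(3) A_subset that degree_eq_card_adjacent_outside[OF that] by (metis subsetD)
  obtain a where "a \<in> A"
    using A_nonempty large by fastforce
  moreover have "card {b\<in>V-A. E a b} \<le> card (V - A)"
    using finite_V by (intro card_mono) auto
  ultimately have "\<delta> \<le> card (V - A)"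
    using deg by (meson order_trans)
  have K: "2 ^ (card V - \<delta>) + 2 ^ \<delta> \<le> num_indep (Kbip_V \<delta> (card V - \<delta>)) (Kbip_E \<delta> (card V - \<delta>)) + 1"
    by (rule num_indep_Kbip_ge)
  have "2 \<le> (2::nat) ^ \<delta>"
    using assms(2) by (cases \<delta>) auto
  show ?thesis
  proof (cases "card (V - A) = \<delta>")
    case True
    with graph_iso_Kbip_or_num_indep_add_two_le[OF deg] K show ?thesis by fastforce
  next
    case False
    with num_indep_le_if_unbalanced[OF deg _ large] \<open>\<delta> \<le> card (V - A)\<close> K \<open>2 \<le> 2 ^ \<delta>\<close>
    show ?thesis by fastforce
  qed
qed

end
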